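(* Let $\mathbf k$ be a commutative domain of characteristic zero and let $\omega=xy-(\phi(x)+y\psi(x))$ with $\phi,\psi\in\mathbf k[x]$ both nonzero. Then there exists a commutative Rota-Baxter algebra $(R,P)$ of weight $0$ such that the $\omega$-cover $\widetilde P$ of $P$ on $R^{\mathbb N}$ (weight-$0$ Hurwitz product) is not a Rota-Baxter operator of weight $0$.
   Context: A Rota-Baxter operator of weight $0$ on an algebra $A$ is a $\mathbf{k}$-linear $P$ with $P(x)P(y)=P(P(x)y)+P(xP(y))$. $R^{\mathbb N}$ is the set of sequences $(f_n)_{n\in\mathbb N}$ in $R$ with product $(fg)_n=\sum_{j=0}^n\binom{n}{j}f_{n-j}g_j$, and $(\partial_R f)_n=f_{n+1}$. For $\phi=\sum_{i=0}^r a_ix^i$, $\psi=\sum_{j=0}^s b_jx^j$, the $\omega$-cover $\widetilde P$ of $P$ is the unique linear operator on $R^{\mathbb N}$ with $\widetilde P_0(f)=P(f_0)$ and $\widetilde P_n(f)=\sum_{i=0}^r a_if_{n-1+i}+\sum_{j=0}^s b_j\widetilde P_{n-1}(\partial_R^jf)$ for $n\ge1$, where $\widetilde P_n(f):=\widetilde P(f)_n$. *)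

theory Defs
  imports "HOL-Computational_Algebra.Polynomial"
begin

record ('k, 'a) kalg =
  kcarrier :: "'a set"
  kzero :: 'a
  kone :: 'a
  kplus :: "'a \<Rightarrow> 'a \<Rightarrow> 'a"
  ktimes :: "'a \<Rightarrow> 'a \<Rightarrow> 'a"
  ksmult :: "'k \<Rightarrow> 'a \<Rightarrow> 'a"

definition comm_kalg :: "('k::comm_ring_1, 'a) kalg \<Rightarrow> bool" where
  "comm_kalg A \<longleftrightarrow>
     kzero A \<in> kcarrier A \<and> kone A \<in> kcarrier A \<and>
     (\<forall>x\<in>kcarrier A. \<forall>y\<in>kcarrier A. kplus A x y \<in> kcarrier A \<and> ktimes A x y \<in> kcarrier A) \<and>
     (\<forall>c x. x \<in> kcarrier A \<longrightarrow> ksmult A c x \<in> kcarrier A) \<and>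
     (\<forall>x\<in>kcarrier A. \<forall>y\<in>kcarrier A. \<forall>z\<in>kcarrier A.
        kplus A (kplus A x y) z = kplus A x (kplus A y z) \<and>
        ktimes A (ktimes A x y) z = ktimes A x (ktimes A y z) \<and>
        ktimes A x (kplus A y z) = kplus A (ktimes A x y) (ktimes A x z)) \<and>
     (\<forall>x\<in>kcarrier A. \<forall>y\<in>kcarrier A.
        kplus A x y = kplus A y x \<and> ktimes A x y = ktimes A y x) \<and>
     (\<forall>x\<in>kcarrier A. kplus A (kzero A) x = x \<and> ktimes A (kone A) x = x \<and>
        (\<exists>y\<in>kcarrier A. kplus A x y = kzero A)) \<and>
     (\<forall>c d. \<forall>x\<in>kcarrier A. \<forall>y\<in>kcarrier A.
        ksmult A c (kplus A x y) = kplus A (ksmult A c x) (ksmult A c y) \<and>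
        ksmult A (c + d) x = kplus A (ksmult A c x) (ksmult A d x) \<and>
        ksmult A (c * d) x = ksmult A c (ksmult A d x) \<and>
        ksmult A 1 x = x \<and>
        ksmult A c (ktimes A x y) = ktimes A (ksmult A c x) y)"

definition rota_baxter0 :: "('k, 'a) kalg \<Rightarrow> ('a \<Rightarrow> 'a) \<Rightarrow> bool" where
  "rota_baxter0 A P \<longleftrightarrow>
     (\<forall>x\<in>kcarrier A. P x \<in> kcarrier A) \<and>
     (\<forall>x\<in>kcarrier A. \<forall>y\<in>kcarrier A. P (kplus A x y) = kplus A (P x) (P y)) \<and>
     (\<forall>c. \<forall>x\<in>kcarrier A. P (ksmult A c x) = ksmult A c (P x)) \<and>
     (\<forall>x\<in>kcarrier A. \<forall>y\<in>kcarrier A.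
        ktimes A (P x) (P y) = kplus A (P (ktimes A (P x) y)) (P (ktimes A x (P y))))"

primrec asum :: "('k, 'a) kalg \<Rightarrow> (nat \<Rightarrow> 'a) \<Rightarrow> nat \<Rightarrow> 'a" where
  "asum A g 0 = kzero A"
| "asum A g (Suc n) = kplus A (asum A g n) (g n)"

definition hurwitz :: "('k::comm_ring_1, 'a) kalg \<Rightarrow> ('k, nat \<Rightarrow> 'a) kalg" where
  "hurwitz A = \<lparr> kcarrier = {f. \<forall>n. f n \<in> kcarrier A},
     kzero = (\<lambda>n. kzero A),
     kone = (\<lambda>n. if n = 0 then kone A else kzero A),
     kplus = (\<lambda>f g n. kplus A (f n) (g n)),
     ktimes = (\<lambda>f g n. asum A (\<lambda>j. ksmult A (of_nat (n choose j)) (ktimes A (f (n - j)) (g j))) (Suc n)),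
     ksmult = (\<lambda>c f n. ksmult A c (f n)) \<rparr>"

fun cover_n :: "('k::comm_ring_1, 'a) kalg \<Rightarrow> 'k poly \<Rightarrow> 'k poly \<Rightarrow> ('a \<Rightarrow> 'a) \<Rightarrow> nat \<Rightarrow> (nat \<Rightarrow> 'a) \<Rightarrow> 'a" where
  "cover_n A phi psi P 0 f = P (f 0)"
| "cover_n A phi psi P (Suc n) f =
     kplus A (asum A (\<lambda>i. ksmult A (coeff phi i) (f (n + i))) (Suc (degree phi)))
             (asum A (\<lambda>j. ksmult A (coeff psi j) (cover_n A phi psi P n (\<lambda>m. f (m + j)))) (Suc (degree psi)))"

definition omega_cover :: "('k::comm_ring_1, 'a) kalg \<Rightarrow> 'k poly \<Rightarrow> 'k poly \<Rightarrow> ('a \<Rightarrow> 'a) \<Rightarrow> (nat \<Rightarrow> 'a) \<Rightarrow> (nat \<Rightarrow> 'a)" where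
  "omega_cover A phi psi P f = (\<lambda>n. cover_n A phi psi P n f)"

end

theory Submission
  imports Defs
begin

text \<open>
  If \<open>\<psi> = x + b\<close>, take \<open>R = \<^bold>k\<^sup>\<nat>\<close> with pointwise operations and \<open>P = 0\<close>.
  For the sequence \<open>f\<close> concentrated in degree \<open>r = deg \<phi>\<close>, the cover \<open>X\<close> of \<open>f\<close>
  has \<open>X\<^sub>0 = 0\<close> and \<open>X\<^sub>1 = a\<close>, the leading coefficient of \<open>\<phi>\<close>, and the Rota-Baxter identity in degree 2 reads \<open>2a\<^sup>2 = 4(r+1)a\<^sup>2\<close>,
  impossible in characteristic zero.

  Otherwise take \<open>R = \<^bold>k[t]/(t\<^sup>3)\<close> in divided powers with \<open>P\<close> the integral. On sequences
  \<open>(l\<^sup>k)\<^sub>k\<close> of constants the cover is explicit, and for the pair \<open>l, u\<close> the Rota-Baxter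
  identity in degree 1, coefficient of \<open>t\<^sup>2/2\<close>, reads
  \<open>2\<psi>(l) + 2\<psi>(u) = \<psi>(u + \<psi>(l)) + \<psi>(l + \<psi>(u))\<close>. For \<open>u = 0\<close> and all \<open>l\<close> this
  polynomial identity forces \<open>\<psi>\<close> to be monic linear: compare degrees, then coefficients.
\<close>

lemma rota_baxter0_mult:
  assumes "rota_baxter0 A P" "x \<in> kcarrier A" "y \<in> kcarrier A"
  shows "ktimes A (P x) (P y) = kplus A (P (ktimes A (P x) y)) (P (ktimes A x (P y)))"
  using assms unfolding rota_baxter0_def by blast

lemma kplus_hurwitz: "kplus (hurwitz A) f g n = kplus A (f n) (g n)"
  by (simp add: hurwitz_def)

definition coordinatewise_kalg :: "('k::comm_ring_1, nat \<Rightarrow> 'k) kalg \<Rightarrow> bool" where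
  "coordinatewise_kalg A \<longleftrightarrow>
     kzero A = (\<lambda>m. 0) \<and> kplus A = (\<lambda>x y m. x m + y m) \<and> ksmult A = (\<lambda>c x m. c * x m)"

lemma asum_coordinatewise:
  assumes "coordinatewise_kalg A"
  shows "asum A g n m = (\<Sum>i<n. g i m)"
  using assms by (induction n) (simp_all add: coordinatewise_kalg_def)

lemma hurwitz_times_coordinatewise:
  assumes "coordinatewise_kalg A"
  shows "ktimes (hurwitz A) f g n m = (\<Sum>j\<le>n. of_nat (n choose j) * ktimes A (f (n - j)) (g j) m)"
  using assms
  by (simp add: hurwitz_def asum_coordinatewise lessThan_Suc_atMost coordinatewise_kalg_def
      del: asum.simps)

lemma hurwitz_times_commute:
  assumes "coordinatewise_kalg A" and "\<And>x y. ktimes A x y = ktimes A y x"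
  shows "ktimes (hurwitz A) f g = ktimes (hurwitz A) g f"
proof (intro ext)
  fix n m
  show "ktimes (hurwitz A) f g n m = ktimes (hurwitz A) g f n m"
    unfolding hurwitz_times_coordinatewise[OF assms(1)] atMost_atLeast0
    by (subst sum.atLeastAtMost_rev) (auto intro!: sum.cong simp: binomial_symmetric[symmetric] assms(2))
qed

lemma cover_n_Suc_coordinatewise:
  assumes "coordinatewise_kalg A"
  shows "cover_n A phi psi P (Suc n) f m =
     (\<Sum>i\<le>degree phi. coeff phi i * f (n + i) m) +
     (\<Sum>j\<le>degree psi. coeff psi j * cover_n A phi psi P n (\<lambda>k. f (k + j)) m)"
  using assms
  by (simp add: asum_coordinatewise lessThan_Suc_atMost coordinatewise_kalg_def del: asum.simps)

definition pointwise_alg :: "('k::comm_ring_1, nat \<Rightarrow> 'k) kalg" where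
  "pointwise_alg = \<lparr>kcarrier = UNIV, kzero = (\<lambda>n. 0), kone = (\<lambda>n. 1),
     kplus = (\<lambda>x y n. x n + y n), ktimes = (\<lambda>x y n. x n * y n),
     ksmult = (\<lambda>c x n. c * x n)\<rparr>"

lemma pointwise_alg_simps [simp]:
  "kcarrier pointwise_alg = UNIV" "kzero pointwise_alg = (\<lambda>n. 0)" "kone pointwise_alg = (\<lambda>n. 1)"
  "kplus pointwise_alg = (\<lambda>x y n. x n + y n)" "ktimes pointwise_alg = (\<lambda>x y n. x n * y n)"
  "ksmult pointwise_alg = (\<lambda>c x n. c * x n)"
  by (simp_all add: pointwise_alg_def)

lemma coordinatewise_pointwise_alg: "coordinatewise_kalg pointwise_alg"
  by (simp add: coordinatewise_kalg_def)

lemma comm_kalg_pointwise_alg: "comm_kalg pointwise_alg"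
  unfolding comm_kalg_def by (auto simp: fun_eq_iff algebra_simps intro: exI[of _ "\<lambda>n. - _ n"])

lemma rota_baxter0_pointwise_alg_zero: "rota_baxter0 pointwise_alg (\<lambda>x n. 0)"
  unfolding rota_baxter0_def by (simp add: fun_eq_iff)

lemma not_rota_baxter0_omega_cover_zero:
  fixes phi psi :: "'k::{idom, ring_char_0} poly"
  assumes "phi \<noteq> 0" and "degree psi = 1" and "coeff psi 1 = 1"
  shows "\<not> rota_baxter0 (hurwitz pointwise_alg) (omega_cover pointwise_alg phi psi (\<lambda>x n. 0))"
proof
  let ?cover = "omega_cover pointwise_alg phi psi (\<lambda>x n. 0)"
  let ?mult = "ktimes (hurwitz pointwise_alg)"
  note cover_Suc = cover_n_Suc_coordinatewise[OF coordinatewise_pointwise_alg]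
  note mult_eq = hurwitz_times_coordinatewise[OF coordinatewise_pointwise_alg]
  assume rb: "rota_baxter0 (hurwitz pointwise_alg) ?cover"
  define r a where "r = degree phi" and "a = lead_coeff phi"
  define F :: "nat \<Rightarrow> nat \<Rightarrow> 'k" where "F = (\<lambda>k m. if k = r then 1 else 0)"
  define X where "X = ?cover F"
  define H where "H = ?mult X F"
  have X0: "X 0 m = 0" for m
    by (simp add: X_def omega_cover_def)
  have X1: "X 1 m = a" for m
  proof -
    have "X 1 m = (\<Sum>i\<le>r. coeff phi i * F i m)"
      unfolding X_def omega_cover_def One_nat_def cover_Suc by (simp add: r_def)
    then show ?thesis by (simp add: F_def a_def r_def if_distrib cong: if_cong)
  qed
  have H_low: "H k m = 0" if "k \<le> r" for k m
    using that by (auto simp: H_def mult_eq F_def X0 intro!: sum.neutral)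
  have H_top: "H (Suc r) m = of_nat (Suc r) * a" for m
  proof -
    have "H (Suc r) m = of_nat (Suc r choose r) * X 1 m"
      by (simp add: H_def mult_eq F_def if_distrib sum.delta cong: if_cong)
    then show ?thesis using X1[of m] by simp
  qed
  have "?mult X X 2 0 = 2 * a * a"
    by (simp add: mult_eq numeral_eq_Suc atMost_Suc X0 X1[unfolded One_nat_def])
  also have "?mult X X = kplus (hurwitz pointwise_alg) (?cover H) (?cover H)"
    using rota_baxter0_mult[OF rb, of F F] hurwitz_times_commute[OF coordinatewise_pointwise_alg, of F X]
    by (simp add: hurwitz_def X_def H_def mult.commute)
  also have "\<dots> 2 0 = 4 * of_nat (Suc r) * a * a"
  proof -
    have "(\<Sum>i\<le>r. coeff phi i * H (Suc i) 0) = (\<Sum>i\<le>r. if i = r then a * H (Suc r) 0 else 0)"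
      by (rule sum.cong) (auto simp: H_low a_def r_def)
    then have shifted: "(\<Sum>i\<le>r. coeff phi i * H (Suc i) 0) = of_nat (Suc r) * a * a"
      by (simp add: H_top)
    have unshifted: "(\<Sum>i\<le>r. coeff phi i * H i 0) = 0"
      by (simp add: H_low)
    have "?cover H 2 0 = 2 * of_nat (Suc r) * a * a"
      unfolding omega_cover_def numeral_2_eq_2 cover_Suc
      by (simp add: assms(2) assms(3)[unfolded One_nat_def] atMost_Suc r_def[symmetric]
          shifted unshifted del: cover_n.simps(2))
    then show ?thesis by (simp add: kplus_hurwitz)
  qed
  finally have "(of_nat (4 * r + 2) :: 'k) * (a * a) = 0"
    by (simp add: algebra_simps)
  moreover have "a \<noteq> 0" using assms(1) by (simp add: a_def)
  ultimately show False by (simp only: mult_eq_0_iff of_nat_eq_0_iff) simp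
qed

text \<open>\<open>\<^bold>k[t]/(t\<^sup>3)\<close> in the basis \<open>1, t, t\<^sup>2/2\<close>: the Hurwitz product truncated after three
  terms, on which \<open>trunc_integral\<close> is integration.\<close>

definition trunc_hurwitz_mult :: "(nat \<Rightarrow> 'k::comm_ring_1) \<Rightarrow> (nat \<Rightarrow> 'k) \<Rightarrow> nat \<Rightarrow> 'k" where
  "trunc_hurwitz_mult x y n =
     (if n = 0 then x 0 * y 0 else if n = 1 then x 0 * y 1 + x 1 * y 0
      else if n = 2 then x 0 * y 2 + 2 * x 1 * y 1 + x 2 * y 0 else 0)"

definition trunc_integral :: "(nat \<Rightarrow> 'k::comm_ring_1) \<Rightarrow> nat \<Rightarrow> 'k" where
  "trunc_integral x n = (if n = 1 then x 0 else if n = 2 then x 1 else 0)"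

definition trunc_hurwitz_alg :: "('k::comm_ring_1, nat \<Rightarrow> 'k) kalg" where
  "trunc_hurwitz_alg = \<lparr>kcarrier = {x. \<forall>n\<ge>3. x n = 0}, kzero = (\<lambda>n. 0),
     kone = (\<lambda>n. if n = 0 then 1 else 0), kplus = (\<lambda>x y n. x n + y n),
     ktimes = trunc_hurwitz_mult, ksmult = (\<lambda>c x n. c * x n)\<rparr>"

lemma trunc_hurwitz_alg_simps [simp]:
  "kcarrier trunc_hurwitz_alg = {x. \<forall>n\<ge>3. x n = 0}" "kzero trunc_hurwitz_alg = (\<lambda>n. 0)"
  "kone trunc_hurwitz_alg = (\<lambda>n. if n = 0 then 1 else 0)"
  "kplus trunc_hurwitz_alg = (\<lambda>x y n. x n + y n)" "ktimes trunc_hurwitz_alg = trunc_hurwitz_mult"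
  "ksmult trunc_hurwitz_alg = (\<lambda>c x n. c * x n)"
  by (simp_all add: trunc_hurwitz_alg_def)

lemma coordinatewise_trunc_hurwitz_alg: "coordinatewise_kalg trunc_hurwitz_alg"
  by (simp add: coordinatewise_kalg_def)

lemma comm_kalg_trunc_hurwitz_alg: "comm_kalg trunc_hurwitz_alg"
  unfolding comm_kalg_def
  by (auto simp: fun_eq_iff algebra_simps trunc_hurwitz_mult_def) (rule_tac x="\<lambda>n. - x n" in exI, simp)

lemma rota_baxter0_trunc_integral: "rota_baxter0 trunc_hurwitz_alg trunc_integral"
  unfolding rota_baxter0_def
  by (auto simp: fun_eq_iff trunc_integral_def trunc_hurwitz_mult_def algebra_simps)

definition geometric_seq :: "'k::comm_ring_1 \<Rightarrow> 'k \<Rightarrow> nat \<Rightarrow> nat \<Rightarrow> 'k" where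
  "geometric_seq c l k n = (if n = 0 then c * l ^ k else 0)"

lemma geometric_seq_shift: "(\<lambda>k. geometric_seq c l (k + j)) = geometric_seq (c * l ^ j) l"
  by (auto simp: geometric_seq_def fun_eq_iff power_add algebra_simps)

lemma omega_cover_geometric_seq:
  assumes "m \<noteq> 0"
  shows "omega_cover trunc_hurwitz_alg phi psi trunc_integral (geometric_seq c l) n m =
    (if m = 1 then c * poly psi l ^ n else 0)"
  unfolding omega_cover_def
proof (induction n arbitrary: c)
  case 0
  then show ?case by (simp add: trunc_integral_def geometric_seq_def)
next
  case (Suc n)
  have "(\<Sum>j\<le>degree psi. coeff psi j * (c * l ^ j * z)) = c * poly psi l * z" for z
    by (simp add: poly_altdef sum_distrib_left sum_distrib_right algebra_simps)
  with assms show ?case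
    unfolding cover_n_Suc_coordinatewise[OF coordinatewise_trunc_hurwitz_alg] geometric_seq_shift Suc
    by (simp add: geometric_seq_def if_distrib cong: if_cong del: cover_n.simps(2))
qed

lemma trunc_hurwitz_alg_times_commute: "ktimes trunc_hurwitz_alg x y = ktimes trunc_hurwitz_alg y x"
  by (simp add: fun_eq_iff trunc_hurwitz_mult_def algebra_simps)

lemma hurwitz_trunc_times_geometric_seq:
  assumes "\<And>k. X k 1 = w ^ k" and "\<And>k. X k 2 = 0"
  shows "ktimes (hurwitz trunc_hurwitz_alg) X (geometric_seq 1 u) j 1 = (u + w) ^ j"
    and "ktimes (hurwitz trunc_hurwitz_alg) X (geometric_seq 1 u) j 2 = 0"
  using assms
  by (simp_all add: hurwitz_times_coordinatewise[OF coordinatewise_trunc_hurwitz_alg] binomial_ring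
      trunc_hurwitz_mult_def geometric_seq_def mult_ac)

lemma omega_cover_one_trunc_powers:
  assumes "\<And>j. H j 1 = z ^ j" and "\<And>j. H j 2 = 0"
  shows "omega_cover trunc_hurwitz_alg phi psi trunc_integral H 1 2 = poly psi z"
  unfolding omega_cover_def One_nat_def cover_n_Suc_coordinatewise[OF coordinatewise_trunc_hurwitz_alg]
  by (simp add: assms(1)[unfolded One_nat_def] assms(2) trunc_integral_def poly_altdef)

lemma not_rota_baxter0_omega_cover_trunc_integral:
  fixes psi :: "'k::comm_ring_1 poly"
  assumes "poly psi (u + poly psi l) + poly psi (l + poly psi u) \<noteq> 2 * poly psi l + 2 * poly psi u"
  shows "\<not> rota_baxter0 (hurwitz trunc_hurwitz_alg) (omega_cover trunc_hurwitz_alg phi psi trunc_integral)"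
proof
  let ?cover = "omega_cover trunc_hurwitz_alg phi psi trunc_integral"
  let ?mult = "ktimes (hurwitz trunc_hurwitz_alg)"
  assume rb: "rota_baxter0 (hurwitz trunc_hurwitz_alg) ?cover"
  define F G where "F = geometric_seq 1 l" and "G = geometric_seq 1 u"
  have X1: "?cover F k 1 = poly psi l ^ k" and X2: "?cover F k 2 = 0" for k
    by (simp_all add: F_def omega_cover_geometric_seq)
  have Y1: "?cover G k 1 = poly psi u ^ k" and Y2: "?cover G k 2 = 0" for k
    by (simp_all add: G_def omega_cover_geometric_seq)
  have "2 * poly psi l + 2 * poly psi u = ?mult (?cover F) (?cover G) 1 2"
    by (simp add: hurwitz_times_coordinatewise[OF coordinatewise_trunc_hurwitz_alg]
        trunc_hurwitz_mult_def X1[unfolded One_nat_def] X2 Y1[unfolded One_nat_def] Y2)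
  also have "?mult (?cover F) (?cover G) =
      kplus (hurwitz trunc_hurwitz_alg) (?cover (?mult (?cover F) G)) (?cover (?mult (?cover G) F))"
    using rota_baxter0_mult[OF rb, of F G]
      hurwitz_times_commute[OF coordinatewise_trunc_hurwitz_alg trunc_hurwitz_alg_times_commute, of F]
    by (simp add: hurwitz_def F_def G_def geometric_seq_def)
  also have "\<dots> 1 2 = poly psi (u + poly psi l) + poly psi (l + poly psi u)"
  proof -
    have "?cover (?mult (?cover F) G) 1 2 = poly psi (u + poly psi l)"
      unfolding G_def
      by (intro omega_cover_one_trunc_powers hurwitz_trunc_times_geometric_seq[of _ "poly psi l", OF X1 X2])
    moreover have "?cover (?mult (?cover G) F) 1 2 = poly psi (l + poly psi u)"
      unfolding F_def
      by (intro omega_cover_one_trunc_powers hurwitz_trunc_times_geometric_seq[of _ "poly psi u", OF Y1 Y2])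
    ultimately show ?thesis by (simp add: kplus_hurwitz)
  qed
  finally show False using assms by simp
qed

lemma degree_le_1_if_composition_identity:
  fixes psi :: "'k::{idom, ring_char_0} poly"
  assumes "\<And>l. poly psi (poly psi l) + poly psi (l + poly psi 0) = 2 * poly psi l + 2 * poly psi 0"
  shows "degree psi \<le> 1"
proof (rule ccontr)
  define s b where "s = degree psi" and "b = poly psi 0"
  assume "\<not> degree psi \<le> 1"
  then have "s < s * s" by (simp add: s_def)
  have "psi \<circ>\<^sub>p psi + psi \<circ>\<^sub>p [:b, 1:] = smult 2 psi + [:2 * b:]"
    by (intro poly_eq_poly_eq_iff[THEN iffD1] ext) (simp add: poly_pcompose b_def assms add.commute[of "poly psi 0"])
  moreover have "degree (psi \<circ>\<^sub>p psi + psi \<circ>\<^sub>p [:b, 1:]) = s * s"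
    using \<open>s < s * s\<close> by (subst degree_add_eq_left) (simp_all add: degree_pcompose s_def)
  moreover have "degree (smult 2 psi + [:2 * b:]) \<le> s"
    by (rule degree_add_le) (simp_all add: s_def)
  ultimately show False using \<open>s < s * s\<close> by simp
qed

lemma monic_linear_if_composition_identity:
  fixes psi :: "'k::{idom, ring_char_0} poly"
  assumes "psi \<noteq> 0"
    and identity: "\<And>l. poly psi (poly psi l) + poly psi (l + poly psi 0) = 2 * poly psi l + 2 * poly psi 0"
  shows "degree psi = 1 \<and> coeff psi 1 = 1"
proof -
  have "degree psi = 0 \<or> degree psi = 1"
    using degree_le_1_if_composition_identity[OF identity] by linarith
  then show ?thesis
  proof
    assume "degree psi = 0"
    then obtain a where "psi = [:a:]" by (rule degree_eq_zeroE)
    with \<open>psi \<noteq> 0\<close> identity[of 0] show ?thesis by simp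
  next
    assume "degree psi = 1"
    then obtain a b where psi: "psi = [:b, a:]" and "a \<noteq> 0" by (rule degree1_coeffs)
    have "a * (a - 1) = 0"
      using identity[of 0] identity[of 1] unfolding psi by (simp only: poly_pCons poly_0) algebra
    with \<open>a \<noteq> 0\<close> \<open>degree psi = 1\<close> show ?thesis by (simp add: psi)
  qed
qed

theorem proposition3p7:
  fixes phi psi :: "'k::{idom, ring_char_0} poly"
  assumes "phi \<noteq> 0" and "psi \<noteq> 0"
  shows "\<exists>(A :: ('k, nat \<Rightarrow> 'k) kalg) P.
           comm_kalg A \<and> rota_baxter0 A P \<and>
           \<not> rota_baxter0 (hurwitz A) (omega_cover A phi psi P)"
proof (cases "degree psi = 1 \<and> coeff psi 1 = 1")
  case True
  then have "\<not> rota_baxter0 (hurwitz pointwise_alg) (omega_cover pointwise_alg phi psi (\<lambda>x n. 0))"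
    using not_rota_baxter0_omega_cover_zero[OF assms(1)] by blast
  with comm_kalg_pointwise_alg rota_baxter0_pointwise_alg_zero show ?thesis by blast
next
  case False
  then obtain l where
    "poly psi (0 + poly psi l) + poly psi (l + poly psi 0) \<noteq> 2 * poly psi l + 2 * poly psi 0"
    using monic_linear_if_composition_identity[OF assms(2)] by force
  then have "\<not> rota_baxter0 (hurwitz trunc_hurwitz_alg) (omega_cover trunc_hurwitz_alg phi psi trunc_integral)"
    by (rule not_rota_baxter0_omega_cover_trunc_integral)
  with comm_kalg_trunc_hurwitz_alg rota_baxter0_trunc_integral show ?thesis by blast
qed

end
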